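(* For each $n\geq1$ the map $\tilde T_n$ is Markov. For $n=1$ a Markov partition is $\{(0,\kappa_1),(\kappa_1,\tfrac12),(\tfrac12,1-\kappa_1),(1-\kappa_1,1)\}$, and for $n\geq2$ a Markov partition consists of the intervals $(0,\kappa_n)$, $(\kappa_n,\tfrac12-\tfrac{\kappa_n}{2(1+\kappa_n)})$, $(\tfrac12-\tfrac{\kappa_n}{2(1+\kappa_n)},\tfrac12)$, $(\tfrac12,\tfrac12+\tfrac{\kappa_n}{2(1+\kappa_n)})$; $(\tilde T_n^{i+1}(\kappa_n),\tilde T_n^i(\kappa_n))$ for $1\le i\le n-2$; and $(\tilde T_n(\kappa_n),1)$. In all cases the Markov partition has $n+3$ intervals.
   Context: For $\kappa\in(0,1/2)$, the paired tent map $T_\kappa:[-1,1]\to[-1,1]$ is $T_\kappa(x)=2(1+\kappa)(x+1)-1$ for $x\in[-1,-1/2]$, $T_\kappa(x)=-2(1+\kappa)x-1$ for $x\in[-1/2,0)$, $T_\kappa(0)=0$, $T_\kappa(x)=-2(1+\kappa)x+1$ for $x\in(0,1/2]$, $T_\kappa(x)=2(1+\kappa)(x-1)+1$ for $x\in[1/2,1]$. For $n\geq1$, $\kappa_n$ is the unique solution in $(0,1/2)$ of $(2+2\kappa)^n\kappa=1$, and $\tilde T_n:[0,1]\to[0,1]$ is $\tilde T_n(x)=|T_{\kappa_n}(x)|$. A map $T$ of an interval $I$ is Markov if there is a finite collection $\{R_i\}_{i=1}^r$ of disjoint open intervals (a Markov partition) such that $I\setminus\bigcup_iR_i$ is exactly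 the set of endpoints of the $R_i$, and whenever $R_i\cap T(R_j)\neq\emptyset$, we have $R_i\subset T(R_j)$. *)

theory Defs
  imports Complex_Main
begin

definition paired_tent :: "real \<Rightarrow> real \<Rightarrow> real" where
  "paired_tent \<kappa> x =
     (if x \<le> -1/2 then 2*(1+\<kappa>)*(x+1) - 1
      else if x < 0 then -2*(1+\<kappa>)*x - 1
      else if x = 0 then 0
      else if x \<le> 1/2 then -2*(1+\<kappa>)*x + 1
      else 2*(1+\<kappa>)*(x-1) + 1)"

definition kappa :: "nat \<Rightarrow> real" where
  "kappa n = (THE k. 0 < k \<and> k < 1/2 \<and> (2+2*k)^n * k = 1)"

definition tildeT :: "nat \<Rightarrow> real \<Rightarrow> real" where
  "tildeT n x = \<bar>paired_tent (kappa n) x\<bar>"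

definition markov_partition :: "(real \<Rightarrow> real) \<Rightarrow> real set \<Rightarrow> real set set \<Rightarrow> bool" where
  "markov_partition T I P \<longleftrightarrow>
     finite P \<and>
     (\<forall>R\<in>P. \<exists>a b. a < b \<and> R = {a<..<b}) \<and>
     pairwise disjnt P \<and>
     \<Union>P \<subseteq> I \<and>
     I - \<Union>P = {x. \<exists>a b. a < b \<and> {a<..<b} \<in> P \<and> (x = a \<or> x = b)} \<and>
     (\<forall>Ri\<in>P. \<forall>Rj\<in>P. Ri \<inter> T ` Rj \<noteq> {} \<longrightarrow> Ri \<subseteq> T ` Rj)"

definition is_markov :: "(real \<Rightarrow> real) \<Rightarrow> real set \<Rightarrow> bool" where
  "is_markov T I \<longleftrightarrow> (\<exists>P. markov_partition T I P)"

end

(*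
  On [0,1] the map x \<mapsto> |T\<^sub>\<kappa>(x)| is piecewise affine with slopes +-s, where s = 2 + 2\<kappa>,
  and its four branches are (0,1/s], [1/s,1/2], (1/2,1-1/s] and [1-1/s,1]. The equation
  s^n \<kappa> = 1 defining \<kappa> = \<kappa>\<^sub>n makes the orbit of \<kappa> finite: T^i \<kappa> = 1 - s^i \<kappa> for
  1 \<le> i \<le> n, decreasing from T \<kappa> down to T^(n-1) \<kappa> = 1 - 1/s and T^n \<kappa> = 0.
  The points 0, \<kappa>, 1/s, 1/2, T^(n-1) \<kappa>, ..., T \<kappa>, 1 therefore cut [0,1] into open
  intervals, each inside one branch and mapped affinely onto an interval between two of
  these points. Consecutive intervals with this property always form a Markov partition,
  because an open interval with endpoints among the cut points contains every partition
  interval it meets. For n = 1 we have 1/s = \<kappa>, and the cut points are 0, \<kappa>, 1/2, 1-\<kappa>, 1.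
*)

theory Submission
  imports Defs "HOL-Library.Extended_Real"
begin

lemma image_greaterThanLessThan_affine:
  fixes f :: "'a::linordered_field \<Rightarrow> 'a"
  assumes "m \<noteq> 0" and f: "\<And>x. a < x \<Longrightarrow> x < b \<Longrightarrow> f x = m * x + c"
  shows "f ` {a<..<b} =
    (if 0 < m then {m * a + c<..<m * b + c} else {m * b + c<..<m * a + c})"
proof (rule set_eqI)
  fix y
  have "f ` {a<..<b} = (\<lambda>x. m * x + c) ` {a<..<b}"
    using f by (intro image_cong) auto
  moreover have "y \<in> (\<lambda>x. m * x + c) ` A \<longleftrightarrow> (y - c) / m \<in> A" for A
  proof
    assume "(y - c) / m \<in> A"
    moreover have "y = m * ((y - c) / m) + c" using assms by simp
    ultimately show "y \<in> (\<lambda>x. m * x + c) ` A" by blast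
  qed (use assms in auto)
  ultimately show "y \<in> f ` {a<..<b} \<longleftrightarrow>
      y \<in> (if 0 < m then {m * a + c<..<m * b + c} else {m * b + c<..<m * a + c})"
    using assms by (cases "0 < m") (auto simp: field_simps)
qed

lemma greaterThanLessThan_subset_if_meets:
  fixes a b c d :: "'a::linorder"
  assumes "{c<..<d} \<inter> {a<..<b} \<noteq> {}" "a \<notin> {c<..<d}" "b \<notin> {c<..<d}"
  shows "{c<..<d} \<subseteq> {a<..<b}"
  using assms by fastforce

locale breakpoints =
  fixes b :: "nat \<Rightarrow> real" and N :: nat
  assumes N_pos: "0 < N" and b_less_Suc: "\<And>j. j < N \<Longrightarrow> b j < b (Suc j)"
begin

definition intervals :: "real set set" where
  "intervals = (\<lambda>j. {b j<..<b (Suc j)}) ` {..<N}"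

lemma b_less: "i < j \<Longrightarrow> j \<le> N \<Longrightarrow> b i < b j"
proof (induction j)
  case (Suc j)
  then show ?case using b_less_Suc[of j] by (cases "i = j") auto
qed simp

lemma b_le: "i \<le> j \<Longrightarrow> j \<le> N \<Longrightarrow> b i \<le> b j"
  using b_less by (cases "i = j") (auto simp: less_eq_real_def)

lemma finite_intervals: "finite intervals"
  unfolding intervals_def by simp

lemma card_intervals: "card intervals = N"
proof -
  have "inj_on (\<lambda>j. {b j<..<b (Suc j)}) {..<N}"
  proof (rule inj_onI)
    fix i j assume ij: "i \<in> {..<N}" "j \<in> {..<N}" "{b i<..<b (Suc i)} = {b j<..<b (Suc j)}"
    then have "b i = b j"
      using b_less_Suc[of i] b_less_Suc[of j] by (auto simp: greaterThanLessThan_eq_iff)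
    then show "i = j"
      using ij b_less[of i j] b_less[of j i] by (cases i j rule: linorder_cases) auto
  qed
  then show ?thesis unfolding intervals_def by (simp add: card_image)
qed

lemma disjoint_intervals: "pairwise disjnt intervals"
proof -
  have "disjnt {b i<..<b (Suc i)} {b j<..<b (Suc j)}" if "i < N" "j < N" "i \<noteq> j" for i j
    using that b_le[of "Suc i" j] b_le[of "Suc j" i]
    by (cases i j rule: linorder_cases) (auto simp: disjnt_def)
  then show ?thesis
    unfolding intervals_def pairwise_image by (auto simp: pairwise_def)
qed

lemma Union_intervals_subset: "\<Union>intervals \<subseteq> {b 0..b N}"
proof
  fix x assume "x \<in> \<Union>intervals"
  then obtain j where "j < N" "b j < x" "x < b (Suc j)"
    unfolding intervals_def by auto
  moreover have "b 0 \<le> b j" "b (Suc j) \<le> b N"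
    using b_le \<open>j < N\<close> by auto
  ultimately show "x \<in> {b 0..b N}" by simp
qed

lemma breakpoint_notin_intervals: "j \<le> N \<Longrightarrow> b j \<notin> \<Union>intervals"
proof
  assume "j \<le> N" "b j \<in> \<Union>intervals"
  then obtain i where "i < N" "b i < b j" "b j < b (Suc i)"
    unfolding intervals_def by auto
  then show False
    using b_le[of j i] b_le[of "Suc i" j] \<open>j \<le> N\<close> by (cases "j \<le> i") auto
qed

lemma breakpoint_or_in_interval:
  "m \<le> N \<Longrightarrow> b 0 \<le> x \<Longrightarrow> x \<le> b m \<Longrightarrow> x \<in> b ` {..m} \<or> (\<exists>j<m. b j < x \<and> x < b (Suc j))"
proof (induction m)
  case (Suc m)
  show ?case
  proof (cases "x \<le> b m")
    case True
    then show ?thesis using Suc by (auto intro: less_SucI)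
  next
    case False
    then show ?thesis using Suc.prems by (cases "x = b (Suc m)") auto
  qed
qed auto

lemma diff_Union_intervals: "{b 0..b N} - \<Union>intervals = b ` {..N}"
proof
  show "{b 0..b N} - \<Union>intervals \<subseteq> b ` {..N}"
    using breakpoint_or_in_interval[of N] unfolding intervals_def by fastforce
  show "b ` {..N} \<subseteq> {b 0..b N} - \<Union>intervals"
    using breakpoint_notin_intervals b_le by auto
qed

lemma endpoints_intervals:
  "{x. \<exists>a c. a < c \<and> {a<..<c} \<in> intervals \<and> (x = a \<or> x = c)} = b ` {..N}"
proof
  show "{x. \<exists>a c. a < c \<and> {a<..<c} \<in> intervals \<and> (x = a \<or> x = c)} \<subseteq> b ` {..N}"
  proof
    fix x assume "x \<in> {x. \<exists>a c. a < c \<and> {a<..<c} \<in> intervals \<and> (x = a \<or> x = c)}"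
    then obtain a c j where "a < c" "j < N" "{a<..<c} = {b j<..<b (Suc j)}" "x = a \<or> x = c"
      unfolding intervals_def by auto
    then have "x = b j \<or> x = b (Suc j)"
      using b_less_Suc[of j] by (auto simp: greaterThanLessThan_eq_iff)
    then show "x \<in> b ` {..N}" using \<open>j < N\<close> by auto
  qed
  show "b ` {..N} \<subseteq> {x. \<exists>a c. a < c \<and> {a<..<c} \<in> intervals \<and> (x = a \<or> x = c)}"
  proof (rule image_subsetI)
    fix j assume "j \<in> {..N}"
    then consider "j < N" | "j = Suc (N - 1)" using N_pos by fastforce
    then show "b j \<in> {x. \<exists>a c. a < c \<and> {a<..<c} \<in> intervals \<and> (x = a \<or> x = c)}"
    proof cases
      case 1
      then show ?thesis unfolding intervals_def using b_less_Suc by blast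
    next
      case 2
      have "N - 1 < N" using N_pos by simp
      then show ?thesis unfolding intervals_def 2 using b_less_Suc by blast
    qed
  qed
qed

lemma markov_partition_intervals:
  assumes images: "\<And>j. j < N \<Longrightarrow>
    \<exists>c d. f ` {b j<..<b (Suc j)} = {c<..<d} \<and> c \<in> b ` {..N} \<and> d \<in> b ` {..N}"
  shows "markov_partition f {b 0..b N} intervals"
proof -
  have "R \<subseteq> f ` R'" if "R \<in> intervals" "R' \<in> intervals" "R \<inter> f ` R' \<noteq> {}" for R R'
  proof -
    obtain i where i: "R = {b i<..<b (Suc i)}" "i < N"
      using \<open>R \<in> intervals\<close> unfolding intervals_def by blast
    obtain j where "R' = {b j<..<b (Suc j)}" "j < N"
      using \<open>R' \<in> intervals\<close> unfolding intervals_def by blast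
    then obtain c d where cd: "f ` R' = {c<..<d}" "c \<in> b ` {..N}" "d \<in> b ` {..N}"
      using images by blast
    have "c \<notin> R" "d \<notin> R"
      using cd(2,3) breakpoint_notin_intervals \<open>R \<in> intervals\<close> by blast+
    then show ?thesis
      using greaterThanLessThan_subset_if_meets \<open>R \<inter> f ` R' \<noteq> {}\<close> unfolding i cd(1) by blast
  qed
  moreover have "\<forall>R\<in>intervals. \<exists>a c. a < c \<and> R = {a<..<c}"
    unfolding intervals_def using b_less_Suc by blast
  ultimately show ?thesis
    unfolding markov_partition_def
    using finite_intervals disjoint_intervals Union_intervals_subset
      diff_Union_intervals endpoints_intervals by auto
qed

end

lemma kappa_spec:
  assumes "1 \<le> n"
  shows "0 < kappa n \<and> kappa n < 1/2 \<and> (2 + 2 * kappa n) ^ n * kappa n = 1"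
proof -
  define f where "f k = (2 + 2 * k) ^ n * k" for k :: real
  have f_mono: "strict_mono_on {0..} f"
  proof (rule strict_mono_onI)
    fix a b :: real assume "a \<in> {0..}" "b \<in> {0..}" "a < b"
    then have "(2 + 2 * a) ^ n \<le> (2 + 2 * b) ^ n" "0 < (2 + 2 * a) ^ n"
      by (auto intro!: power_mono)
    then show "f a < f b" unfolding f_def using \<open>a \<in> {0..}\<close> \<open>a < b\<close>
      by (intro mult_le_less_imp_less) auto
  qed
  have "(3::real) ^ 1 \<le> 3 ^ n" using assms by (intro power_increasing) auto
  then have f_ends: "f 0 < 1" "1 < f (1/2)" unfolding f_def by auto
  moreover have "continuous_on {0..1/2} f" unfolding f_def by (intro continuous_intros)
  ultimately obtain k where "0 \<le> k" "k \<le> 1/2" "f k = 1"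
    using IVT'[of f 0 1 "1/2"] by auto
  with f_ends have k: "0 < k" "k < 1/2" "f k = 1"
    by (metis order_less_irrefl order_le_less)+
  have "kappa n = k" unfolding kappa_def
  proof (rule the_equality)
    fix k' :: real assume "0 < k' \<and> k' < 1/2 \<and> (2 + 2 * k') ^ n * k' = 1"
    then have "f k = f k'" "k \<in> {0..}" "k' \<in> {0..}" using k by (simp_all add: f_def)
    then show "k' = k" by (rule strict_mono_on_eqD[OF f_mono])
  qed (use k f_def in auto)
  then show ?thesis using k f_def by simp
qed

locale tent_slope =
  fixes \<kappa> s :: real
  assumes kappa_pos: "0 < \<kappa>" and slope_eq: "s = 2 + 2 * \<kappa>"
begin

abbreviation T :: "real \<Rightarrow> real" where "T \<equiv> \<lambda>x. \<bar>paired_tent \<kappa> x\<bar>"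

lemma slope_gt_two: "2 < s"
  using kappa_pos slope_eq by simp

lemma inv_slope_less_half: "1/s < 1/2"
  using slope_gt_two by (simp add: field_simps)

lemma half_slope: "s * (1/2) - 1 = \<kappa>"
  using slope_eq by (simp add: field_simps)

lemma T_left: "0 < x \<Longrightarrow> x \<le> 1/2 \<Longrightarrow> T x = \<bar>1 - s * x\<bar>"
  by (simp add: paired_tent_def slope_eq algebra_simps)

lemma T_right: "1/2 < x \<Longrightarrow> T x = \<bar>s * x + 1 - s\<bar>"
  by (simp add: paired_tent_def slope_eq algebra_simps)

lemma image_left_decreasing:
  assumes "0 \<le> a" "a < b" "b \<le> 1/s"
  shows "T ` {a<..<b} = {1 - s * b<..<1 - s * a}"
proof -
  have "T x = - s * x + 1" if "a < x" "x < b" for x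
  proof -
    have "s * x < s * b" using \<open>x < b\<close> slope_gt_two by simp
    also have "s * b \<le> 1" using assms slope_gt_two by (simp add: field_simps)
    finally have "s * x < 1" .
    then show ?thesis using that assms inv_slope_less_half T_left by simp
  qed
  then show ?thesis using image_greaterThanLessThan_affine[of "- s" a b T] slope_gt_two by simp
qed

lemma image_left_increasing:
  assumes "1/s \<le> a" "a < b" "b \<le> 1/2"
  shows "T ` {a<..<b} = {s * a - 1<..<s * b - 1}"
proof -
  have "T x = s * x + - 1" if "a < x" "x < b" for x
  proof -
    have "1 \<le> s * a" using assms slope_gt_two by (simp add: field_simps)
    also have "s * a < s * x" using \<open>a < x\<close> slope_gt_two by simp
    finally have "1 < s * x" .
    moreover have "0 < 1/s" using slope_gt_two by simp
    then have "0 < x" using that assms by linarith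
    ultimately show ?thesis using that assms T_left by simp
  qed
  then show ?thesis
    using image_greaterThanLessThan_affine[of s a b T "- 1"] slope_gt_two by simp
qed

lemma image_right_decreasing:
  assumes "1/2 \<le> a" "a < b" "b \<le> 1 - 1/s"
  shows "T ` {a<..<b} = {s - 1 - s * b<..<s - 1 - s * a}"
proof -
  have "T x = - s * x + (s - 1)" if "a < x" "x < b" for x
  proof -
    have "s * x < s * b" using \<open>x < b\<close> slope_gt_two by simp
    also have "s * b \<le> s - 1" using assms slope_gt_two by (simp add: field_simps)
    finally have "s * x + 1 - s < 0" by simp
    then show ?thesis using that assms T_right by simp
  qed
  then show ?thesis using image_greaterThanLessThan_affine[of "- s" a b T] slope_gt_two by simp
qed

lemma T_right_increasing: "1 - 1/s \<le> x \<Longrightarrow> T x = s * x + (1 - s)"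
proof -
  assume x: "1 - 1/s \<le> x"
  then have "0 \<le> s * x + 1 - s" using slope_gt_two by (simp add: field_simps)
  moreover have "1/2 < x" using x inv_slope_less_half by simp
  ultimately show ?thesis using T_right by simp
qed

lemma image_right_increasing:
  assumes "1 - 1/s \<le> a" "a < b"
  shows "T ` {a<..<b} = {s * a + (1 - s)<..<s * b + (1 - s)}"
  using image_greaterThanLessThan_affine[of s a b T "1 - s"] slope_gt_two assms T_right_increasing
  by simp

lemma markov_partition_preperiod_one:
  assumes "s * \<kappa> = 1"
  defines "P \<equiv> {{0<..<\<kappa>}, {\<kappa><..<1/2}, {1/2<..<1 - \<kappa>}, {1 - \<kappa><..<1}}"
  shows "markov_partition T {0..1} P" and "card P = 4"
proof -
  have inv_slope: "1/s = \<kappa>" using assms slope_gt_two by (simp add: field_simps)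
  then have "\<kappa> < 1/2" using inv_slope_less_half by simp
  define b where "b = (!) [0, \<kappa>, 1/2, 1 - \<kappa>, 1]"
  have j_cases: "j = 0 \<or> j = 1 \<or> j = 2 \<or> j = 3" if "j < 4" for j :: nat
    using that by linarith
  interpret breakpoints b 4
  proof
    fix j :: nat assume "j < 4"
    then have "j = 0 \<or> j = 1 \<or> j = 2 \<or> j = 3" by (rule j_cases)
    then show "b j < b (Suc j)"
      using kappa_pos \<open>\<kappa> < 1/2\<close> by (elim disjE) (simp_all add: b_def)
  qed simp
  have "T ` {b 0<..<b 1} = {b 0<..<b 4}"
    using image_left_decreasing[of 0 \<kappa>] kappa_pos assms inv_slope by (simp add: b_def)
  moreover have "T ` {b 1<..<b 2} = {b 0<..<b 1}"
    using image_left_increasing[of \<kappa> "1/2"] \<open>\<kappa> < 1/2\<close> assms inv_slope half_slope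
    by (simp add: b_def)
  moreover have "T ` {b 2<..<b 3} = {b 0<..<b 1}"
    using image_right_decreasing[of "1/2" "1 - \<kappa>"] \<open>\<kappa> < 1/2\<close> assms inv_slope slope_eq
    by (simp add: b_def algebra_simps)
  moreover have "T ` {b 3<..<b 4} = {b 0<..<b 4}"
    using image_right_increasing[of "1 - \<kappa>" 1] kappa_pos assms inv_slope
    by (simp add: b_def algebra_simps)
  ultimately have "\<exists>c d. T ` {b j<..<b (Suc j)} = {c<..<d} \<and> c \<in> b ` {..4} \<and> d \<in> b ` {..4}"
    if "j < 4" for j
    using j_cases[OF that] by (elim disjE) (simp_all add: numeral_eq_Suc, blast+)
  moreover have "{..<4::nat} = {0, 1, 2, 3}" by auto
  then have "intervals = P"
    unfolding intervals_def unfolding P_def b_def by simp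
  ultimately show "markov_partition T {0..1} P" "card P = 4"
    using markov_partition_intervals card_intervals by (simp_all add: b_def)
qed

end

locale tent_preperiodic = tent_slope +
  fixes n :: nat
  assumes two_le_n: "2 \<le> n" and slope_pow_kappa: "s ^ n * \<kappa> = 1"
begin

definition orbit :: "nat \<Rightarrow> real" where "orbit i = 1 - s ^ i * \<kappa>"

lemma orbit_less_iff: "orbit i < orbit j \<longleftrightarrow> j < i"
  using slope_gt_two kappa_pos by (simp add: orbit_def)

lemma orbit_le_iff: "orbit i \<le> orbit j \<longleftrightarrow> j \<le> i"
  using slope_gt_two kappa_pos by (simp add: orbit_def)

lemma orbit_n: "orbit n = 0"
  using slope_pow_kappa by (simp add: orbit_def)

lemma orbit_Suc: "orbit (Suc i) = s * orbit i + (1 - s)"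
  by (simp add: orbit_def algebra_simps)

lemma orbit_pred_n: "orbit (n - 1) = 1 - 1/s"
proof -
  have "s * orbit (n - 1) + (1 - s) = 0"
    using orbit_Suc[of "n - 1"] orbit_n two_le_n by simp
  then show ?thesis using slope_gt_two by (simp add: field_simps)
qed

lemma kappa_less_inv_slope: "\<kappa> < 1/s"
proof -
  have "orbit n < orbit 1" using orbit_less_iff two_le_n by simp
  then show ?thesis using orbit_n slope_gt_two by (simp add: orbit_def field_simps)
qed

lemma iterate_T_kappa: "1 \<le> i \<Longrightarrow> i \<le> n \<Longrightarrow> (T ^^ i) \<kappa> = orbit i"
proof (induction i rule: nat_induct_at_least)
  case base
  have "s * \<kappa> < 1" using kappa_less_inv_slope slope_gt_two by (simp add: field_simps)
  then show ?case
    using T_left[of \<kappa>] kappa_pos kappa_less_inv_slope inv_slope_less_half by (simp add: orbit_def)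
next
  case (Suc i)
  have "1 - 1/s \<le> orbit i" using orbit_le_iff[of "n - 1" i] orbit_pred_n Suc.prems by simp
  then show ?case using Suc T_right_increasing orbit_Suc by simp
qed

definition breakpoint :: "nat \<Rightarrow> real" where
  "breakpoint j =
    (if j = 0 then 0 else if j = 1 then \<kappa> else if j = 2 then 1/s else if j = 3 then 1/2
     else if j < n + 3 then orbit (n + 3 - j) else 1)"

lemma breakpoint_eq_orbit: "4 \<le> j \<Longrightarrow> j \<le> n + 2 \<Longrightarrow> breakpoint j = orbit (n + 3 - j)"
  by (simp add: breakpoint_def)

sublocale breakpoints breakpoint "n + 3"
proof
  fix j assume "j < n + 3"
  then consider "j \<le> 2" | "j = 3" | "4 \<le> j" "j \<le> n + 1" | "j = n + 2" by linarith
  then show "breakpoint j < breakpoint (Suc j)"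
  proof cases
    case 1
    then consider "j = 0" | "j = 1" | "j = 2" by linarith
    then show ?thesis
      using kappa_pos kappa_less_inv_slope inv_slope_less_half
      by cases (simp_all add: breakpoint_def)
  next
    case 2
    then show ?thesis using two_le_n orbit_pred_n inv_slope_less_half by (simp add: breakpoint_def)
  next
    case 3
    then show ?thesis using orbit_less_iff by (simp add: breakpoint_eq_orbit Suc_diff_le)
  next
    case 4
    then show ?thesis using kappa_pos slope_gt_two by (simp add: breakpoint_def orbit_def)
  qed
qed simp

lemma orbit_mem_breakpoints: "1 \<le> i \<Longrightarrow> i \<le> n \<Longrightarrow> orbit i \<in> breakpoint ` {..n + 3}"
proof (cases "i = n")
  case True
  then show ?thesis using orbit_n by (intro rev_image_eqI[of 0]) (simp_all add: breakpoint_def)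
next
  case False
  moreover assume "1 \<le> i" "i \<le> n"
  ultimately have "breakpoint (n + 3 - i) = orbit i"
    using breakpoint_eq_orbit[of "n + 3 - i"] by simp
  then show ?thesis by (intro rev_image_eqI[of "n + 3 - i"]) simp_all
qed

lemma image_breakpoint_interval:
  assumes "j < n + 3"
  shows "\<exists>c d. T ` {breakpoint j<..<breakpoint (Suc j)} = {c<..<d}
    \<and> c \<in> breakpoint ` {..n + 3} \<and> d \<in> breakpoint ` {..n + 3}"
proof -
  let ?B = "breakpoint ` {..n + 3}" and ?R = "{breakpoint j<..<breakpoint (Suc j)}"
  have zero: "0 \<in> ?B" by (intro rev_image_eqI[of 0]) (simp_all add: breakpoint_def)
  have kappa: "\<kappa> \<in> ?B" by (intro rev_image_eqI[of 1]) (simp_all add: breakpoint_def)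
  have one: "1 \<in> ?B"
    using two_le_n by (intro rev_image_eqI[of "n + 3"]) (simp_all add: breakpoint_def)
  have inv_slope: "s * (1/s) = 1" using slope_gt_two by simp
  from assms consider "j = 0" | "j = 1" | "j = 2" | "j = 3" | "4 \<le> j" "j \<le> n + 1" | "j = n + 2"
    by linarith
  then show ?thesis
  proof cases
    case 1
    have "T ` ?R = {1 - s * \<kappa><..<1 - s * 0}"
      using 1 kappa_pos kappa_less_inv_slope by (simp add: breakpoint_def image_left_decreasing)
    then show ?thesis using one orbit_mem_breakpoints[of 1] two_le_n unfolding orbit_def by auto
  next
    case 2
    have "T ` ?R = {1 - s * (1/s)<..<1 - s * \<kappa>}"
      using 2 kappa_pos kappa_less_inv_slope by (simp add: breakpoint_def image_left_decreasing)
    then show ?thesis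
      using zero orbit_mem_breakpoints[of 1] two_le_n inv_slope unfolding orbit_def by auto
  next
    case 3
    have "T ` ?R = {s * (1/s) - 1<..<s * (1/2) - 1}"
      using 3 inv_slope_less_half by (simp add: breakpoint_def image_left_increasing)
    then show ?thesis using zero kappa inv_slope half_slope by auto
  next
    case 4
    have "breakpoint 4 = 1 - 1/s" using orbit_pred_n two_le_n by (simp add: breakpoint_eq_orbit)
    then have "T ` ?R = {s - 1 - s * (1 - 1/s)<..<s - 1 - s * (1/2)}"
      using 4 inv_slope_less_half by (simp add: breakpoint_def image_right_decreasing)
    moreover have "s - 1 - s * (1 - 1/s) = 0" "s - 1 - s * (1/2) = \<kappa>"
      using inv_slope half_slope by (simp_all add: algebra_simps)
    ultimately have "T ` ?R = {0<..<\<kappa>}" by (simp only:)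
    then show ?thesis using zero kappa by blast
  next
    case 5
    define i where "i = n + 2 - j"
    have i: "1 \<le> i" "Suc i \<le> n - 1" using 5 by (auto simp: i_def)
    have "n + 3 - j = Suc i" "n + 3 - Suc j = i" using 5 by (auto simp: i_def)
    then have "breakpoint j = orbit (Suc i)" "breakpoint (Suc j) = orbit i"
      using 5 breakpoint_eq_orbit[of j] breakpoint_eq_orbit[of "Suc j"] by auto
    moreover have "1 - 1/s \<le> orbit (Suc i)"
      using orbit_le_iff[of "n - 1" "Suc i"] orbit_pred_n i by simp
    ultimately have "T ` ?R = {orbit (Suc (Suc i))<..<orbit (Suc i)}"
      using image_right_increasing[of "orbit (Suc i)" "orbit i"] orbit_less_iff[of "Suc i" i]
        orbit_Suc[of "Suc i"] orbit_Suc[of i, symmetric] by simp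
    moreover have "orbit (Suc (Suc i)) \<in> ?B" "orbit (Suc i) \<in> ?B"
      using orbit_mem_breakpoints i by auto
    ultimately show ?thesis by blast
  next
    case 6
    have "breakpoint j = orbit 1" "breakpoint (Suc j) = 1"
      using 6 two_le_n by (simp_all add: breakpoint_def)
    moreover have "1 - 1/s \<le> orbit 1" using orbit_le_iff[of "n - 1" 1] orbit_pred_n two_le_n by simp
    moreover have "orbit 1 < 1" using kappa_pos slope_gt_two by (simp add: orbit_def)
    moreover have "orbit 2 = s * orbit 1 + (1 - s)"
      using orbit_Suc[of 1] by (simp add: numeral_2_eq_2)
    ultimately have "T ` ?R = {orbit 2<..<1}"
      using image_right_increasing[of "orbit 1" 1] by simp
    moreover have "orbit 2 \<in> ?B" using orbit_mem_breakpoints two_le_n by simp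
    ultimately show ?thesis using one by blast
  qed
qed

lemma markov_partition_breakpoint_intervals: "markov_partition T {0..1} intervals"
proof -
  have "breakpoint 0 = 0" "breakpoint (n + 3) = 1" using two_le_n by (simp_all add: breakpoint_def)
  then show ?thesis using markov_partition_intervals[OF image_breakpoint_interval] by simp
qed

lemma intervals_eq_orbit_partition:
  "intervals = {{0<..<\<kappa>}, {\<kappa><..<1/s}, {1/s<..<1/2}, {1/2<..<1 - 1/s}}
     \<union> {{orbit (i + 1)<..<orbit i} | i. 1 \<le> i \<and> i \<le> n - 2} \<union> {{orbit 1<..<1}}"
proof -
  let ?I = "\<lambda>j. {breakpoint j<..<breakpoint (Suc j)}"
  have idx: "{..<n + 3} = {0, 1, 2, 3} \<union> (\<lambda>i. n + 2 - i) ` {1..n - 2} \<union> {n + 2}"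
  proof (intro equalityI subsetI)
    fix j assume "j \<in> {..<n + 3}"
    moreover have "j \<in> (\<lambda>i. n + 2 - i) ` {1..n - 2}" if "4 \<le> j" "j \<le> n + 1"
      using that by (intro rev_image_eqI[of "n + 2 - j"]) auto
    ultimately show "j \<in> {0, 1, 2, 3} \<union> (\<lambda>i. n + 2 - i) ` {1..n - 2} \<union> {n + 2}"
      by force
  qed (use two_le_n in auto)
  have "intervals = ?I ` {0, 1, 2, 3} \<union> ?I ` (\<lambda>i. n + 2 - i) ` {1..n - 2} \<union> {?I (n + 2)}"
    unfolding intervals_def idx by (simp only: image_Un image_insert image_empty)
  also have "?I ` {0, 1, 2, 3} = {{0<..<\<kappa>}, {\<kappa><..<1/s}, {1/s<..<1/2}, {1/2<..<1 - 1/s}}"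
    using orbit_pred_n two_le_n by (simp add: breakpoint_def)
  also have "?I ` (\<lambda>i. n + 2 - i) ` {1..n - 2}
      = {{orbit (i + 1)<..<orbit i} | i. 1 \<le> i \<and> i \<le> n - 2}"
  proof -
    have "?I (n + 2 - i) = {orbit (i + 1)<..<orbit i}" if "i \<in> {1..n - 2}" for i
    proof -
      have "n + 3 - (n + 2 - i) = i + 1" "n + 3 - Suc (n + 2 - i) = i" using that by auto
      then show ?thesis
        using that breakpoint_eq_orbit[of "n + 2 - i"] breakpoint_eq_orbit[of "Suc (n + 2 - i)"]
        by auto
    qed
    then show ?thesis unfolding image_image by force
  qed
  also have "?I (n + 2) = {orbit 1<..<1}" using two_le_n by (simp add: breakpoint_def)
  finally show ?thesis .
qed

end

lemma tildeT_1_markov_partition: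
  defines "P \<equiv> {{0<..<kappa 1}, {kappa 1<..<1/2}, {1/2<..<1 - kappa 1}, {1 - kappa 1<..<1}}"
  shows "markov_partition (tildeT 1) {0..1} P" and "card P = 4"
proof -
  interpret tent_slope "kappa 1" "2 + 2 * kappa 1"
    using kappa_spec[of 1] by unfold_locales auto
  have "tildeT 1 = T" by (simp add: fun_eq_iff tildeT_def)
  moreover have "(2 + 2 * kappa 1) * kappa 1 = 1" using kappa_spec[of 1] by simp
  ultimately show "markov_partition (tildeT 1) {0..1} P" "card P = 4"
    using markov_partition_preperiod_one unfolding P_def by simp_all
qed

lemma tildeT_markov_partition:
  assumes "2 \<le> n"
  defines "k \<equiv> kappa n"
  defines "P \<equiv> {{0<..<k}, {k<..<1/2 - k / (2 * (1 + k))}, {1/2 - k / (2 * (1 + k))<..<1/2},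
      {1/2<..<1/2 + k / (2 * (1 + k))}}
    \<union> {{(tildeT n ^^ (i + 1)) k<..<(tildeT n ^^ i) k} | i. 1 \<le> i \<and> i \<le> n - 2}
    \<union> {{tildeT n k<..<1}}"
  shows "markov_partition (tildeT n) {0..1} P" and "card P = n + 3"
proof -
  interpret tent_preperiodic k "2 + 2 * k" n
    using kappa_spec[of n] assms by unfold_locales auto
  have T: "tildeT n = T" by (simp add: fun_eq_iff tildeT_def k_def)
  have c: "1/2 - k / (2 * (1 + k)) = 1 / (2 + 2 * k)"
    "1/2 + k / (2 * (1 + k)) = 1 - 1 / (2 + 2 * k)"
    using kappa_pos by (simp_all add: field_simps)
  have orbit: "{{(T ^^ (i + 1)) k<..<(T ^^ i) k} | i. 1 \<le> i \<and> i \<le> n - 2}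
      = {{orbit (i + 1)<..<orbit i} | i. 1 \<le> i \<and> i \<le> n - 2}"
  proof -
    have "(T ^^ (i + 1)) k = orbit (i + 1)" "(T ^^ i) k = orbit i" if "1 \<le> i" "i \<le> n - 2" for i
      using iterate_T_kappa[of "i + 1"] iterate_T_kappa[of i] that two_le_n by simp_all
    then show ?thesis by (intro Collect_cong ex_cong1) metis
  qed
  have "T k = orbit 1" using iterate_T_kappa[of 1] two_le_n by simp
  then have "P = intervals"
    unfolding P_def T c orbit intervals_eq_orbit_partition by simp
  then show "markov_partition (tildeT n) {0..1} P" "card P = n + 3"
    using markov_partition_breakpoint_intervals card_intervals T by simp_all
qed

theorem lemma15:
  fixes n :: nat
  assumes "n \<ge> 1"
  shows "is_markov (tildeT n) {0..1} \<and>
    (n = 1 \<longrightarrow>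
       (let k = kappa 1;
            P = {{0<..<k}, {k<..<1/2}, {1/2<..<1-k}, {1-k<..<1}}
        in markov_partition (tildeT 1) {0..1} P \<and> card P = n + 3)) \<and>
    (n \<ge> 2 \<longrightarrow>
       (let k = kappa n; c = k / (2*(1+k));
            P = {{0<..<k}, {k<..<1/2 - c}, {1/2 - c<..<1/2}, {1/2<..<1/2 + c}}
                \<union> {{(tildeT n ^^ (i+1)) k<..<(tildeT n ^^ i) k} | i. 1 \<le> i \<and> i \<le> n - 2}
                \<union> {{tildeT n k<..<1}}
        in markov_partition (tildeT n) {0..1} P \<and> card P = n + 3))"
proof (cases "n = 1")
  case True
  then show ?thesis
    using tildeT_1_markov_partition unfolding is_markov_def Let_def by auto
next
  case False
  with assms have "2 \<le> n" by simp
  then show ?thesis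
    using tildeT_markov_partition[of n] unfolding is_markov_def Let_def by auto
qed

end
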